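(* Let $b\ge 1$ be an integer and let $a_1<a_2<\dots<a_l$ be integers with $l\ge 2$ such that $a_{i+1}-a_i\le b$ for all $1\le i<l$. Set $A=\{a_1,\dots,a_l\}$. Then for every integer $n>2b^2$, \[ nA=\bigcup_{1\le k<l}\Big((n-2b^2)\{a_k,a_{k+1}\}+2b^2A\Big). \]
   Context: For a subset $A$ of an abelian group and a positive integer $n$, $nA=A+A+\dots+A$ ($n$ summands) denotes the $n$-fold sumset $\{c_1+\dots+c_n : c_i\in A\}$ (repetitions allowed); sums of sets are Minkowski sums $X+Y=\{x+y: x\in X, y\in Y\}$. *)

theory Defs
  imports Main
begin

definition msum :: "int set \<Rightarrow> int set \<Rightarrow> int set" where
  "msum X Y = {x + y | x y. x \<in> X \<and> y \<in> Y}"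

definition nfold :: "nat \<Rightarrow> int set \<Rightarrow> int set" where
  "nfold n A = {sum_list cs | cs. length cs = n \<and> set cs \<subseteq> A}"

end

theory Submission
  imports Defs
begin

text \<open>
  Write an element of \<open>nA\<close> as \<open>c\<^sub>1 + \<dots> + c\<^sub>n\<close> with all \<open>c\<^sub>i \<in> A\<close> and \<open>\<Sum> c\<^sub>i\<^sup>2\<close> minimal.
  Suppose some \<open>M \<in> A\<close> had at least \<open>b\<close> summands below it and at least \<open>b\<close> above it.
  Moving each of \<open>b\<close> lower summands to the next element of \<open>A\<close> towards \<open>M\<close> raises it by an
  amount in \<open>[1, b]\<close>, and likewise for lowering \<open>b\<close> upper summands. A pigeonhole argument on
  partial sums yields a nonempty group of raises and a group of lowerings with the same total;
  performing just those keeps the sum and, as every moved summand approaches \<open>M\<close>, strictly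
  decreases \<open>\<Sum> c\<^sub>i\<^sup>2\<close>. So at a minimiser every \<open>a\<^sub>m\<close> has fewer than \<open>b\<close> summands on one of
  its sides, and walking from \<open>a\<^sub>1\<close> to \<open>a\<^sub>l\<close> gives a \<open>k\<close> with fewer than \<open>b\<close> summands below
  \<open>a\<^sub>k\<close> and fewer than \<open>b\<close> above \<open>a\<^sub>k\<^sub>+\<^sub>1\<close>. Hence fewer than \<open>2b \<le> 2b\<^sup>2\<close> summands lie outside
  \<open>{a\<^sub>k, a\<^sub>k\<^sub>+\<^sub>1}\<close>.
\<close>

lemma ex_index_within_step:
  fixes G :: "nat \<Rightarrow> int" and x :: int
  assumes "G 0 \<le> x" "x \<le> G m" "\<And>j. j < m \<Longrightarrow> G (Suc j) \<le> G j + d" "d > 0"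
  shows "\<exists>j\<le>m. G j \<le> x \<and> x < G j + d"
  using assms(2,3)
proof (induction m)
  case 0
  then show ?case using assms(1,4) by auto
next
  case (Suc m)
  show ?case
  proof (cases "x \<le> G m")
    case True
    with Suc show ?thesis by (meson le_SucI less_SucI)
  next
    case False
    show ?thesis
    proof (cases "x = G (Suc m)")
      case True
      then show ?thesis using assms(4) by auto
    next
      case False
      have "G m < x" "x < G m + d" using False \<open>\<not> x \<le> G m\<close> Suc.prems by force+
      then show ?thesis by (intro exI[of _ m]) auto
    qed
  qed
qed

lemma ex_equal_increments:
  fixes F G :: "nat \<Rightarrow> int"
  assumes F_less: "\<And>i i'. i < i' \<Longrightarrow> i' \<le> b \<Longrightarrow> F i < F i'"
    and G_mono: "\<And>j j'. j \<le> j' \<Longrightarrow> j' \<le> b \<Longrightarrow> G j \<le> G j'"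
    and G_step: "\<And>j. j < b \<Longrightarrow> G (Suc j) \<le> G j + int b"
    and "G 0 \<le> F 0" "F b \<le> G b" "b > 0"
  shows "\<exists>i i' j j'. i < i' \<and> i' \<le> b \<and> j < j' \<and> j' \<le> b \<and> F i' - F i = G j' - G j"
proof -
  have "\<exists>j\<le>b. G j \<le> F i \<and> F i < G j + int b" if "i \<le> b" for i
  proof (rule ex_index_within_step)
    show "G 0 \<le> F i"
      using F_less[of 0 i] that \<open>G 0 \<le> F 0\<close> by (cases "i = 0") auto
    show "F i \<le> G b"
      using F_less[of i b] that \<open>F b \<le> G b\<close> by (cases "i = b") auto
  qed (use G_step \<open>b > 0\<close> in auto)
  then obtain J where J: "\<And>i. i \<le> b \<Longrightarrow> J i \<le> b \<and> G (J i) \<le> F i \<and> F i < G (J i) + int b"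
    by metis
  define d where "d i = F i - G (J i)" for i
  have "\<not> inj_on d {0..b}"
  proof
    assume "inj_on d {0..b}"
    moreover have "d ` {0..b} \<subseteq> {0..<int b}"
      using J by (force simp: d_def)
    ultimately have "card {0..b} \<le> card {0..<int b}"
      by (intro card_inj_on_le) auto
    then show False by simp
  qed
  then obtain x y where xy: "x \<le> b" "y \<le> b" "x \<noteq> y" "d x = d y"
    unfolding inj_on_def by auto
  define i i' where "i = min x y" and "i' = max x y"
  have i: "i < i'" "i' \<le> b" and "d i = d i'"
    using xy by (auto simp: i_def i'_def min_def max_def)
  then have J_diff: "G (J i') - G (J i) = F i' - F i"
    by (simp add: d_def)
  have "J i < J i'"
  proof (rule ccontr)
    assume "\<not> J i < J i'"
    then have "G (J i') \<le> G (J i)"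
      using G_mono J i by simp
    with J_diff F_less[OF i] show False by simp
  qed
  with i J[of i'] J_diff show ?thesis
    by metis
qed

lemma equal_block_sums_of_sum_le:
  fixes f g :: "nat \<Rightarrow> int"
  assumes f: "\<And>t. t < b \<Longrightarrow> 1 \<le> f t \<and> f t \<le> int b"
    and g: "\<And>t. t < b \<Longrightarrow> 1 \<le> g t \<and> g t \<le> int b"
    and le: "sum f {0..<b} \<le> sum g {0..<b}"
    and "b > 0"
  shows "\<exists>i1 i2 j1 j2. i1 < i2 \<and> i2 \<le> b \<and> j1 < j2 \<and> j2 \<le> b \<and>
           sum f {i1..<i2} = sum g {j1..<j2}"
proof -
  define F where "F i = sum f {0..<i}" for i
  define G where "G j = sum g {0..<j}" for j
  have F_diff: "F i' - F i = sum f {i..<i'}" if "i \<le> i'" for i i'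
    unfolding F_def using sum.atLeastLessThan_concat[of 0 i i' f] that by simp
  have G_diff: "G j' - G j = sum g {j..<j'}" if "j \<le> j'" for j j'
    unfolding G_def using sum.atLeastLessThan_concat[of 0 j j' g] that by simp
  have "\<exists>i i' j j'. i < i' \<and> i' \<le> b \<and> j < j' \<and> j' \<le> b \<and> F i' - F i = G j' - G j"
  proof (rule ex_equal_increments)
    show "F i < F i'" if "i < i'" "i' \<le> b" for i i'
    proof -
      have "0 < f t" if "t \<in> {i..<i'}" for t
        using f[of t] that \<open>i' \<le> b\<close> by simp
      then have "0 < sum f {i..<i'}"
        using \<open>i < i'\<close> by (intro sum_pos) auto
      with F_diff[of i i'] that show ?thesis by simp
    qed
    show "G j \<le> G j'" if "j \<le> j'" "j' \<le> b" for j j'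
    proof -
      have "0 \<le> g t" if "t \<in> {j..<j'}" for t
        using g[of t] that \<open>j' \<le> b\<close> by simp
      then have "0 \<le> sum g {j..<j'}"
        by (intro sum_nonneg) auto
      with G_diff[of j j'] that show ?thesis by simp
    qed
    show "G (Suc j) \<le> G j + int b" if "j < b" for j
      using g[OF that] by (simp add: G_def)
  qed (use le \<open>b > 0\<close> in \<open>simp_all add: F_def G_def\<close>)
  then show ?thesis
    using F_diff G_diff by (metis less_imp_le)
qed

lemma equal_block_sums:
  fixes f g :: "nat \<Rightarrow> int"
  assumes "\<And>t. t < b \<Longrightarrow> 1 \<le> f t \<and> f t \<le> int b"
    and "\<And>t. t < b \<Longrightarrow> 1 \<le> g t \<and> g t \<le> int b"
    and "b > 0"
  shows "\<exists>i1 i2 j1 j2. i1 < i2 \<and> i2 \<le> b \<and> j1 < j2 \<and> j2 \<le> b \<and>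
           sum f {i1..<i2} = sum g {j1..<j2}"
proof (cases "sum f {0..<b} \<le> sum g {0..<b}")
  case True
  with assms show ?thesis
    by (intro equal_block_sums_of_sum_le) auto
next
  case False
  with assms have "\<exists>j1 j2 i1 i2. j1 < j2 \<and> j2 \<le> b \<and> i1 < i2 \<and> i2 \<le> b \<and>
                     sum g {j1..<j2} = sum f {i1..<i2}"
    by (intro equal_block_sums_of_sum_le) auto
  then show ?thesis by metis
qed

lemma sum_squares_less_if_toward:
  fixes c c' :: "'a \<Rightarrow> 'b :: linordered_idom"
  assumes "finite S" and same_sum: "sum c' S = sum c S"
    and toward: "\<And>i. i \<in> S \<Longrightarrow> c i \<le> c' i \<and> c' i \<le> M \<or> M \<le> c' i \<and> c' i \<le> c i"
    and "i0 \<in> S" "c' i0 \<noteq> c i0"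
  shows "(\<Sum>i\<in>S. (c' i)\<^sup>2) < (\<Sum>i\<in>S. (c i)\<^sup>2)"
proof -
  define h where "h i = (c' i - c i) * (c' i + c i - 2 * M)" for i
  have "h i \<le> 0" if "i \<in> S" for i
    using toward[OF that] unfolding h_def
    by (auto intro: mult_nonneg_nonpos mult_nonpos_nonneg)
  moreover have "h i0 < 0"
    using toward[OF \<open>i0 \<in> S\<close>] \<open>c' i0 \<noteq> c i0\<close> unfolding h_def
    by (auto intro: mult_pos_neg mult_neg_pos)
  ultimately have "sum h S < 0"
    using sum_strict_mono_ex1[of S h "\<lambda>_. 0"] \<open>finite S\<close> \<open>i0 \<in> S\<close> by auto
  moreover have "(c' i)\<^sup>2 = (c i)\<^sup>2 + h i + 2 * M * (c' i - c i)" for i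
    unfolding h_def by (simp add: power2_eq_square algebra_simps)
  then have "(\<Sum>i\<in>S. (c' i)\<^sup>2) = (\<Sum>i\<in>S. (c i)\<^sup>2) + sum h S + 2 * M * (sum c' S - sum c S)"
    by (simp add: sum.distrib sum_distrib_left[symmetric] sum_subtractf)
  ultimately show ?thesis
    using same_sum by simp
qed

lemma sum_update_balanced:
  fixes c u v :: "'a \<Rightarrow> 'b :: ab_group_add"
  assumes "finite S" "I \<subseteq> S" "J \<subseteq> S" "I \<inter> J = {}"
    and "(\<Sum>i\<in>I. u i - c i) = (\<Sum>i\<in>J. c i - v i)"
  shows "(\<Sum>i\<in>S. if i \<in> I then u i else if i \<in> J then v i else c i) = sum c S"
proof -
  have "(if i \<in> I then u i else if i \<in> J then v i else c i) - c i =
        (if i \<in> I then u i - c i else 0) - (if i \<in> J then c i - v i else 0)" for i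
    using assms(4) by auto
  then have "(\<Sum>i\<in>S. (if i \<in> I then u i else if i \<in> J then v i else c i) - c i) =
             (\<Sum>i\<in>I. u i - c i) - (\<Sum>i\<in>J. c i - v i)"
    using assms(1-3) by (simp add: sum_subtractf sum.If_cases Int_absorb1)
  with assms(5) show ?thesis
    by (simp add: sum_subtractf)
qed

lemma ex_subsets_equal_sums:
  fixes u v :: "'a \<Rightarrow> int"
  assumes "b \<le> card X" "b \<le> card Y" "b > 0"
    and u: "\<And>x. x \<in> X \<Longrightarrow> 1 \<le> u x \<and> u x \<le> int b"
    and v: "\<And>y. y \<in> Y \<Longrightarrow> 1 \<le> v y \<and> v y \<le> int b"
  obtains I J where "I \<subseteq> X" "J \<subseteq> Y" "I \<noteq> {}" "sum u I = sum v J"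
proof -
  have "finite X" "finite Y"
    using assms(1-3) card_gt_0_iff[of X] card_gt_0_iff[of Y] by linarith+
  obtain p where p: "p ` {0..<b} \<subseteq> X" "inj_on p {0..<b}"
    using card_le_inj[of "{0..<b}" X] \<open>finite X\<close> assms(1) by auto
  obtain q where q: "q ` {0..<b} \<subseteq> Y" "inj_on q {0..<b}"
    using card_le_inj[of "{0..<b}" Y] \<open>finite Y\<close> assms(2) by auto
  have "\<exists>i1 i2 j1 j2. i1 < i2 \<and> i2 \<le> b \<and> j1 < j2 \<and> j2 \<le> b \<and>
          sum (u \<circ> p) {i1..<i2} = sum (v \<circ> q) {j1..<j2}"
  proof (rule equal_block_sums)
    show "1 \<le> (u \<circ> p) t \<and> (u \<circ> p) t \<le> int b" if "t < b" for t
      using u[of "p t"] p(1) that by (simp add: image_subset_iff)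
    show "1 \<le> (v \<circ> q) t \<and> (v \<circ> q) t \<le> int b" if "t < b" for t
      using v[of "q t"] q(1) that by (simp add: image_subset_iff)
  qed (rule \<open>b > 0\<close>)
  then obtain i1 i2 j1 j2 where ij: "i1 < i2" "i2 \<le> b" "j1 < j2" "j2 \<le> b"
    and "sum (u \<circ> p) {i1..<i2} = sum (v \<circ> q) {j1..<j2}"
    by auto
  moreover have "inj_on p {i1..<i2}" "inj_on q {j1..<j2}"
    using ij by (auto intro: inj_on_subset[OF p(2)] inj_on_subset[OF q(2)])
  ultimately have "sum u (p ` {i1..<i2}) = sum v (q ` {j1..<j2})"
    by (simp add: sum.reindex)
  moreover have "p ` {i1..<i2} \<subseteq> X" "q ` {j1..<j2} \<subseteq> Y" "p ` {i1..<i2} \<noteq> {}"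
    using p(1) q(1) ij by auto
  ultimately show ?thesis
    using that by blast
qed

lemma exchange_lowers_sum_squares:
  fixes A :: "int set" and c :: "nat \<Rightarrow> int" and M :: int
  assumes up: "\<And>x. x \<in> A \<Longrightarrow> x < M \<Longrightarrow> up x \<in> A \<and> x < up x \<and> up x \<le> M \<and> up x - x \<le> int b"
    and dn: "\<And>y. y \<in> A \<Longrightarrow> M < y \<Longrightarrow> dn y \<in> A \<and> M \<le> dn y \<and> dn y < y \<and> y - dn y \<le> int b"
    and "b > 0"
    and cA: "\<And>i. i < n \<Longrightarrow> c i \<in> A"
    and "b \<le> card {i\<in>{0..<n}. c i < M}" "b \<le> card {i\<in>{0..<n}. M < c i}"
  shows "\<exists>c'. (\<forall>i<n. c' i \<in> A) \<and> sum c' {0..<n} = sum c {0..<n} \<and>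
           (\<Sum>i\<in>{0..<n}. (c' i)\<^sup>2) < (\<Sum>i\<in>{0..<n}. (c i)\<^sup>2)"
proof -
  define Lo Hi where "Lo = {i\<in>{0..<n}. c i < M}" and "Hi = {i\<in>{0..<n}. M < c i}"
  have c_Lo: "c i \<in> A" "c i < M" if "i \<in> Lo" for i
    using that cA by (auto simp: Lo_def)
  have c_Hi: "c i \<in> A" "M < c i" if "i \<in> Hi" for i
    using that cA by (auto simp: Hi_def)
  have "b \<le> card Lo" "b \<le> card Hi"
    using assms(5,6) by (simp_all add: Lo_def Hi_def)
  moreover have "1 \<le> up (c i) - c i \<and> up (c i) - c i \<le> int b" if "i \<in> Lo" for i
    using up[of "c i"] c_Lo[OF that] by simp
  moreover have "1 \<le> c i - dn (c i) \<and> c i - dn (c i) \<le> int b" if "i \<in> Hi" for i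
    using dn[of "c i"] c_Hi[OF that] by simp
  ultimately obtain I J where IJ: "I \<subseteq> Lo" "J \<subseteq> Hi" "I \<noteq> {}"
    and balanced: "(\<Sum>i\<in>I. up (c i) - c i) = (\<Sum>i\<in>J. c i - dn (c i))"
    using ex_subsets_equal_sums[of b Lo Hi "\<lambda>i. up (c i) - c i" "\<lambda>i. c i - dn (c i)"] \<open>b > 0\<close>
    by blast
  have "Lo \<inter> Hi = {}" "Lo \<subseteq> {0..<n}" "Hi \<subseteq> {0..<n}"
    by (auto simp: Lo_def Hi_def)
  with IJ have disj: "I \<inter> J = {}" and IJ_sub: "I \<subseteq> {0..<n}" "J \<subseteq> {0..<n}"
    by blast+
  define c' where "c' i = (if i \<in> I then up (c i) else if i \<in> J then dn (c i) else c i)" for i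
  have same_sum: "sum c' {0..<n} = sum c {0..<n}"
    unfolding c'_def using IJ_sub disj balanced by (intro sum_update_balanced) auto
  obtain i0 where "i0 \<in> I"
    using IJ(3) by blast
  have "(\<Sum>i\<in>{0..<n}. (c' i)\<^sup>2) < (\<Sum>i\<in>{0..<n}. (c i)\<^sup>2)"
  proof (rule sum_squares_less_if_toward[OF _ same_sum])
    show "c i \<le> c' i \<and> c' i \<le> M \<or> M \<le> c' i \<and> c' i \<le> c i" for i
    proof (cases "i \<in> I")
      case True
      then show ?thesis
        using up[of "c i"] c_Lo[of i] IJ(1) by (auto simp: c'_def)
    next
      case False
      then show ?thesis
        using dn[of "c i"] c_Hi[of i] IJ(2) by (auto simp: c'_def)
    qed
    show "i0 \<in> {0..<n}" "c' i0 \<noteq> c i0"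
      using \<open>i0 \<in> I\<close> IJ IJ_sub up[OF c_Lo, of i0] by (auto simp: c'_def)
  qed simp
  moreover have "\<forall>i<n. c' i \<in> A"
    using cA up[OF c_Lo] dn[OF c_Hi] IJ by (auto simp: c'_def)
  ultimately show ?thesis
    using same_sum by blast
qed

lemma ex_consecutive_transition:
  fixes P Q :: "nat \<Rightarrow> bool"
  assumes "1 < l" "P 1" "Q l" "\<And>k. 1 \<le> k \<Longrightarrow> k \<le> l \<Longrightarrow> P k \<or> Q k"
  shows "\<exists>k\<in>{1..<l}. P k \<and> Q (Suc k)"
proof -
  define k where "k = Max {k\<in>{1..<l}. P k}"
  have "k \<in> {k\<in>{1..<l}. P k}"
    unfolding k_def using assms(1,2) by (intro Max_in) auto
  moreover have "\<not> P (Suc k)" if "Suc k < l"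
  proof
    assume "P (Suc k)"
    with that have "Suc k \<le> k"
      unfolding k_def by (intro Max_ge) auto
    then show False by simp
  qed
  ultimately show ?thesis
    using assms(3) assms(4)[of "Suc k"] by (cases "Suc k = l") auto
qed

lemma sum_mem_nfold:
  fixes S :: "'a :: linorder set"
  assumes "finite S" "c ` S \<subseteq> A"
  shows "sum c S \<in> nfold (card S) A"
proof -
  have "sum c S = sum_list (map c (sorted_list_of_set S))"
    using assms(1) by (simp add: sum_list_distinct_conv_sum_set)
  then show ?thesis
    using assms unfolding nfold_def by fastforce
qed

lemma msum_nfold_subset:
  assumes "B \<subseteq> A"
  shows "msum (nfold m B) (nfold k A) \<subseteq> nfold (m + k) A"
proof
  fix s assume "s \<in> msum (nfold m B) (nfold k A)"
  then obtain xs ys where "s = sum_list (xs @ ys)" "length (xs @ ys) = m + k" "set (xs @ ys) \<subseteq> A"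
    using assms unfolding msum_def nfold_def by auto
  then show "s \<in> nfold (m + k) A"
    unfolding nfold_def by blast
qed

lemma nfold_ex_min_sum_squares:
  assumes "s \<in> nfold n A"
  obtains c where "\<forall>i<n. c i \<in> A" "sum c {0..<n} = s"
    "\<And>c'. \<forall>i<n. c' i \<in> A \<Longrightarrow> sum c' {0..<n} = s \<Longrightarrow>
       (\<Sum>i\<in>{0..<n}. (c i)\<^sup>2) \<le> (\<Sum>i\<in>{0..<n}. (c' i)\<^sup>2)"
proof -
  define R where "R c \<longleftrightarrow> (\<forall>i<n. c i \<in> A) \<and> sum c {0..<n} = s" for c :: "nat \<Rightarrow> int"
  obtain cs where "length cs = n" "set cs \<subseteq> A" "s = sum_list cs"
    using assms unfolding nfold_def by blast
  then have "R (nth cs)"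
    by (auto simp: R_def sum_list_sum_nth)
  then obtain c where "R c" and min: "\<And>c'. R c' \<Longrightarrow>
      nat (\<Sum>i\<in>{0..<n}. (c i)\<^sup>2) \<le> nat (\<Sum>i\<in>{0..<n}. (c' i)\<^sup>2)"
    using ex_has_least_nat[of R _ "\<lambda>c. nat (\<Sum>i\<in>{0..<n}. (c i)\<^sup>2)"] by blast
  have "(\<Sum>i\<in>{0..<n}. (c i)\<^sup>2) \<le> (\<Sum>i\<in>{0..<n}. (c' i)\<^sup>2)" if "R c'" for c'
    using min[OF that] sum_nonneg[of "{0..<n}" "\<lambda>i. (c' i)\<^sup>2"] by simp
  with \<open>R c\<close> that show ?thesis
    by (auto simp: R_def)
qed

lemma sum_mem_msum_nfold:
  assumes cA: "\<And>i. i < n \<Longrightarrow> c i \<in> A" and "m \<le> n"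
    and few_outside: "card {i\<in>{0..<n}. c i \<notin> B} \<le> m"
  shows "sum c {0..<n} \<in> msum (nfold (n - m) B) (nfold m A)"
proof -
  define Inside where "Inside = {i\<in>{0..<n}. c i \<in> B}"
  have "{0..<n} = Inside \<union> {i\<in>{0..<n}. c i \<notin> B}"
    by (auto simp: Inside_def)
  then have "card {0..<n} \<le> card Inside + card {i\<in>{0..<n}. c i \<notin> B}"
    by (metis card_Un_le)
  then have "n - m \<le> card Inside"
    using few_outside by simp
  then obtain T where T: "T \<subseteq> Inside" "card T = n - m"
    by (meson obtain_subset_with_card_n)
  define R where "R = {0..<n} - T"
  have T_sub: "T \<subseteq> {0..<n}"
    using T(1) by (auto simp: Inside_def)
  then have "finite T"
    using finite_subset by blast
  have "card R = m"
    using T_sub \<open>finite T\<close> T(2) \<open>m \<le> n\<close> by (simp add: R_def card_Diff_subset)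
  moreover have "c ` R \<subseteq> A"
    using cA by (auto simp: R_def)
  ultimately have "sum c R \<in> nfold m A"
    using sum_mem_nfold[of R c A] by (simp add: R_def)
  moreover have "sum c T \<in> nfold (n - m) B"
    using sum_mem_nfold[OF \<open>finite T\<close>, of c B] T by (auto simp: Inside_def)
  moreover have "sum c {0..<n} = sum c T + sum c R"
    using sum.subset_diff[OF T_sub, of c] by (simp add: R_def add.commute)
  ultimately show ?thesis
    unfolding msum_def by blast
qed

lemma strict_mono_on_atLeastAtMost_Suc:
  fixes a :: "nat \<Rightarrow> 'a :: order"
  assumes "\<And>i. m \<le> i \<Longrightarrow> i < l \<Longrightarrow> a i < a (Suc i)"
  shows "strict_mono_on {m..l} a"
proof (rule strict_mono_onI)
  fix i j assume "i \<in> {m..l}" "j \<in> {m..l}" "i < j"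
  then show "a i < a j"
  proof (induction j)
    case (Suc j)
    then show ?case
      using assms[of j] by (cases "i = j") (auto intro: order.strict_trans)
  qed simp
qed

locale gapped_sequence =
  fixes a :: "nat \<Rightarrow> int" and l b :: nat
  assumes two_le_l: "2 \<le> l"
    and increasing: "\<And>i. 1 \<le> i \<Longrightarrow> i < l \<Longrightarrow> a i < a (Suc i)"
    and gap: "\<And>i. 1 \<le> i \<Longrightarrow> i < l \<Longrightarrow> a (Suc i) - a i \<le> int b"
begin

lemma b_pos: "b > 0"
proof -
  have "1 < l"
    using two_le_l by simp
  then have "a 1 < a (Suc 1)" "a (Suc 1) - a 1 \<le> int b"
    using increasing[of 1] gap[of 1] by auto
  then show ?thesis by linarith
qed

lemma a_strict_mono: "strict_mono_on {1..l} a"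
  by (rule strict_mono_on_atLeastAtMost_Suc) (rule increasing)

lemma a_less_iff: "i \<in> {1..l} \<Longrightarrow> j \<in> {1..l} \<Longrightarrow> a i < a j \<longleftrightarrow> i < j"
  using strict_mono_on_less[OF a_strict_mono] .

lemma step_up:
  assumes "x \<in> a ` {1..l}" "M \<in> a ` {1..l}" "x < M"
  shows "\<exists>x'\<in>a ` {1..l}. x < x' \<and> x' \<le> M \<and> x' - x \<le> int b"
proof -
  obtain i m where "i \<in> {1..l}" "m \<in> {1..l}" "x = a i" "M = a m"
    using assms(1,2) by blast
  with assms(3) have "i < m" using a_less_iff[of i m] by simp
  then have "a (Suc i) \<le> a m"
    using \<open>i \<in> {1..l}\<close> \<open>m \<in> {1..l}\<close> strict_mono_on_less_eq[OF a_strict_mono] by simp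
  with \<open>i < m\<close> \<open>i \<in> {1..l}\<close> \<open>m \<in> {1..l}\<close> show ?thesis
    using increasing[of i] gap[of i] \<open>x = a i\<close> \<open>M = a m\<close> by (intro bexI[of _ "a (Suc i)"]) auto
qed

lemma step_down:
  assumes "y \<in> a ` {1..l}" "M \<in> a ` {1..l}" "M < y"
  shows "\<exists>y'\<in>a ` {1..l}. M \<le> y' \<and> y' < y \<and> y - y' \<le> int b"
proof -
  obtain j m where "j \<in> {1..l}" "m \<in> {1..l}" "y = a j" "M = a m"
    using assms(1,2) by blast
  with assms(3) have "m < j" using a_less_iff[of m j] by simp
  define i where "i = j - 1"
  with \<open>m < j\<close> have j: "j = Suc i" and "m \<le> i"
    by simp_all
  then have "a m \<le> a i"
    using \<open>j \<in> {1..l}\<close> \<open>m \<in> {1..l}\<close> strict_mono_on_less_eq[OF a_strict_mono] by simp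
  with j \<open>m \<le> i\<close> \<open>j \<in> {1..l}\<close> \<open>m \<in> {1..l}\<close> show ?thesis
    using increasing[of i] gap[of i] \<open>y = a j\<close> \<open>M = a m\<close> by (intro bexI[of _ "a i"]) auto
qed

lemma outside_consecutive_pair:
  assumes "x \<in> a ` {1..l}" "k \<in> {1..<l}" "x \<notin> {a k, a (Suc k)}"
  shows "x < a k \<or> a (Suc k) < x"
proof -
  obtain j where j: "j \<in> {1..l}" "x = a j"
    using assms(1) by blast
  with assms(3) have "j \<noteq> k" "j \<noteq> Suc k"
    by auto
  then have "j < k \<or> Suc k < j"
    by linarith
  with j assms(2) show ?thesis
    using a_less_iff[of j k] a_less_iff[of "Suc k" j] by auto
qed

lemma min_sum_squares_balanced:
  fixes c :: "nat \<Rightarrow> int" and n :: nat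
  assumes cA: "\<And>i. i < n \<Longrightarrow> c i \<in> a ` {1..l}"
    and minimal: "\<And>c'. \<forall>i<n. c' i \<in> a ` {1..l} \<Longrightarrow> sum c' {0..<n} = sum c {0..<n} \<Longrightarrow>
       (\<Sum>i\<in>{0..<n}. (c i)\<^sup>2) \<le> (\<Sum>i\<in>{0..<n}. (c' i)\<^sup>2)"
    and M: "M \<in> a ` {1..l}"
  shows "card {i\<in>{0..<n}. c i < M} < b \<or> card {i\<in>{0..<n}. M < c i} < b"
proof (rule ccontr)
  assume "\<not> ?thesis"
  then have lo: "b \<le> card {i\<in>{0..<n}. c i < M}" and hi: "b \<le> card {i\<in>{0..<n}. M < c i}"
    by simp_all
  obtain up where up: "\<And>x. x \<in> a ` {1..l} \<Longrightarrow> x < M \<Longrightarrow>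
      up x \<in> a ` {1..l} \<and> x < up x \<and> up x \<le> M \<and> up x - x \<le> int b"
    using step_up[OF _ M] by metis
  obtain dn where dn: "\<And>y. y \<in> a ` {1..l} \<Longrightarrow> M < y \<Longrightarrow>
      dn y \<in> a ` {1..l} \<and> M \<le> dn y \<and> dn y < y \<and> y - dn y \<le> int b"
    using step_down[OF _ M] by metis
  from exchange_lowers_sum_squares[OF up dn b_pos cA lo hi] minimal show False
    by (meson not_le)
qed

lemma min_sum_squares_concentrated:
  fixes c :: "nat \<Rightarrow> int" and n :: nat
  assumes cA: "\<And>i. i < n \<Longrightarrow> c i \<in> a ` {1..l}"
    and minimal: "\<And>c'. \<forall>i<n. c' i \<in> a ` {1..l} \<Longrightarrow> sum c' {0..<n} = sum c {0..<n} \<Longrightarrow>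
       (\<Sum>i\<in>{0..<n}. (c i)\<^sup>2) \<le> (\<Sum>i\<in>{0..<n}. (c' i)\<^sup>2)"
  shows "\<exists>k\<in>{1..<l}. card {i\<in>{0..<n}. c i \<notin> {a k, a (Suc k)}} < 2 * b"
proof -
  define below above where "below x = card {i\<in>{0..<n}. c i < x}"
    and "above x = card {i\<in>{0..<n}. x < c i}" for x
  have "a 1 \<le> c i \<and> c i \<le> a l" if "i < n" for i
    using cA[OF that] two_le_l strict_mono_on_less_eq[OF a_strict_mono] by auto
  then have zeros: "below (a 1) = 0" "above (a l) = 0"
    by (force simp: below_def above_def)+
  have "\<exists>k\<in>{1..<l}. below (a k) < b \<and> above (a (Suc k)) < b"
  proof (rule ex_consecutive_transition[where P = "\<lambda>k. below (a k) < b" and Q = "\<lambda>k. above (a k) < b"])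
    show "1 < l"
      using two_le_l by simp
    show "below (a 1) < b" "above (a l) < b"
      using zeros b_pos by simp_all
    show "below (a k) < b \<or> above (a k) < b" if "1 \<le> k" "k \<le> l" for k
    proof -
      have "a k \<in> a ` {1..l}"
        using that by simp
      from min_sum_squares_balanced[OF cA minimal this] show ?thesis
        unfolding below_def above_def .
    qed
  qed
  then obtain k where k: "k \<in> {1..<l}" "below (a k) < b" "above (a (Suc k)) < b"
    by blast
  have "{i\<in>{0..<n}. c i \<notin> {a k, a (Suc k)}} \<subseteq>
        {i\<in>{0..<n}. c i < a k} \<union> {i\<in>{0..<n}. a (Suc k) < c i}"
  proof
    fix i assume i: "i \<in> {i\<in>{0..<n}. c i \<notin> {a k, a (Suc k)}}"
    then have "c i < a k \<or> a (Suc k) < c i"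
      using outside_consecutive_pair[OF cA k(1)] by simp
    with i show "i \<in> {i\<in>{0..<n}. c i < a k} \<union> {i\<in>{0..<n}. a (Suc k) < c i}"
      by blast
  qed
  then have "card {i\<in>{0..<n}. c i \<notin> {a k, a (Suc k)}} \<le>
      card ({i\<in>{0..<n}. c i < a k} \<union> {i\<in>{0..<n}. a (Suc k) < c i})"
    by (intro card_mono) auto
  also have "\<dots> \<le> below (a k) + above (a (Suc k))"
    unfolding below_def above_def by (rule card_Un_le)
  finally show ?thesis
    using k by (intro bexI[of _ k]) auto
qed

lemma nfold_subset_UN_msum_pairs:
  assumes "2 * b \<le> m" "m \<le> n"
  shows "nfold n (a ` {1..l}) \<subseteq>
    (\<Union>k\<in>{1..<l}. msum (nfold (n - m) {a k, a (Suc k)}) (nfold m (a ` {1..l})))"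
proof
  fix s assume "s \<in> nfold n (a ` {1..l})"
  then obtain c where cA: "\<forall>i<n. c i \<in> a ` {1..l}" and "sum c {0..<n} = s"
    and "\<And>c'. \<forall>i<n. c' i \<in> a ` {1..l} \<Longrightarrow> sum c' {0..<n} = s \<Longrightarrow>
           (\<Sum>i\<in>{0..<n}. (c i)\<^sup>2) \<le> (\<Sum>i\<in>{0..<n}. (c' i)\<^sup>2)"
    by (rule nfold_ex_min_sum_squares) blast
  then have "\<exists>k\<in>{1..<l}. card {i\<in>{0..<n}. c i \<notin> {a k, a (Suc k)}} < 2 * b"
    by (intro min_sum_squares_concentrated) auto
  then obtain k where k: "k \<in> {1..<l}"
    and few_outside: "card {i\<in>{0..<n}. c i \<notin> {a k, a (Suc k)}} < 2 * b"
    by blast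
  have "sum c {0..<n} \<in> msum (nfold (n - m) {a k, a (Suc k)}) (nfold m (a ` {1..l}))"
    using cA few_outside assms by (intro sum_mem_msum_nfold) auto
  with k \<open>sum c {0..<n} = s\<close>
  show "s \<in> (\<Union>k\<in>{1..<l}. msum (nfold (n - m) {a k, a (Suc k)}) (nfold m (a ` {1..l})))"
    by blast
qed

end

theorem mainTheorem2:
  fixes b :: nat and l :: nat and a :: "nat \<Rightarrow> int" and n :: nat
  assumes "b \<ge> 1"
    and "l \<ge> 2"
    and "\<And>i. 1 \<le> i \<Longrightarrow> i < l \<Longrightarrow> a i < a (Suc i)"
    and "\<And>i. 1 \<le> i \<Longrightarrow> i < l \<Longrightarrow> a (Suc i) - a i \<le> int b"
    and "n > 2 * b^2"
  shows "nfold n (a ` {1..l}) =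
    (\<Union>k\<in>{1..<l}. msum (nfold (n - 2 * b^2) {a k, a (Suc k)})
                          (nfold (2 * b^2) (a ` {1..l})))"
proof -
  interpret gapped_sequence a l b
    using assms(2-4) by unfold_locales
  have "2 * b \<le> 2 * b^2"
    by (simp add: power2_eq_square)
  with assms(5) have "nfold n (a ` {1..l}) \<subseteq>
      (\<Union>k\<in>{1..<l}. msum (nfold (n - 2 * b^2) {a k, a (Suc k)}) (nfold (2 * b^2) (a ` {1..l})))"
    by (intro nfold_subset_UN_msum_pairs) auto
  moreover have "msum (nfold (n - 2 * b^2) {a k, a (Suc k)}) (nfold (2 * b^2) (a ` {1..l}))
      \<subseteq> nfold n (a ` {1..l})" if "k \<in> {1..<l}" for k
    using that assms(5) msum_nfold_subset[of "{a k, a (Suc k)}" "a ` {1..l}" "n - 2 * b^2" "2 * b^2"]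
    by simp
  ultimately show ?thesis
    by blast
qed

end
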